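(* Let $G,H\colon\mathbb{R}^n\to\mathbb{R}^n$ be selfadjoint linear maps and assume that $$\wedge^k G+\wedge^k H=\beta\wedge^k\mathrm{id}$$ for some constant $\beta\in\mathbb{R}$ with $\beta\neq 0$ and some $k\in\{1,\dots,n-1\}$. Then $G$ and $H$ have a common orthonormal basis of eigenvectors. If $k\ge 2$, then $G$ or $H$ is an isomorphism.
   Context: For a linear map $A$ on $\mathbb{R}^n$, $\wedge^kA$ denotes the induced linear map on the exterior power $\bigwedge^k\mathbb{R}^n$, $(\wedge^kA)(v_1\wedge\dots\wedge v_k)=Av_1\wedge\dots\wedge Av_k$. *)

theory Defs
  imports "HOL-Analysis.Analysis"
begin

definition kdet :: "nat \<Rightarrow> (nat \<Rightarrow> nat \<Rightarrow> real) \<Rightarrow> real" where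
  "kdet k M = (\<Sum>p | p permutes {..<k}. of_int (sign p) * (\<Prod>i<k. M i (p i)))"

(* The k-vector v 0 \<and> ... \<and> v (k-1) in \<And>^k R^n, represented by its coordinates
   as an antisymmetric k-tensor: the coordinate at the index tuple
   (idx 0, ..., idx (k-1)) is det [ (v j) $ (idx l) ]_{l,j<k}.
   This representation of \<And>^k R^n inside the k-fold tensor power is injective and linear. *)
definition wedge :: "nat \<Rightarrow> (nat \<Rightarrow> real^'n) \<Rightarrow> ((nat \<Rightarrow> 'n) \<Rightarrow> real)" where
  "wedge k v = (\<lambda>idx. kdet k (\<lambda>l j. v j $ idx l))"

(* (\<And>^k A) applied to a decomposable k-vector v 0 \<and> ... \<and> v (k-1):
   A v 0 \<and> ... \<and> A v (k-1). *)
definition ext_pow_app :: "nat \<Rightarrow> real^'n^'n \<Rightarrow> (nat \<Rightarrow> real^'n) \<Rightarrow> ((nat \<Rightarrow> 'n) \<Rightarrow> real)" where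
  "ext_pow_app k A v = wedge k (\<lambda>j. A *v v j)"

(* The identity  \<And>^k G + \<And>^k H = \<beta> \<And>^k id  of linear maps on \<And>^k R^n.
   Since decomposable k-vectors span \<And>^k R^n and all maps are linear, this is
   equivalent to equality on all decomposable k-vectors. *)
definition ext_pow_sum_eq :: "nat \<Rightarrow> real^'n^'n \<Rightarrow> real^'n^'n \<Rightarrow> real \<Rightarrow> bool" where
  "ext_pow_sum_eq k G H \<beta> \<longleftrightarrow>
     (\<forall>v. \<forall>idx. ext_pow_app k G v idx + ext_pow_app k H v idx = \<beta> * ext_pow_app k (mat 1) v idx)"

end

theory Submission
  imports Defs "Jordan_Normal_Form.Determinant"
begin

text \<open>
  Conjugating by an orthogonal matrix whose rows form an eigenbasis of \<open>G\<close> preserves the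
  hypothesis (the \<open>k\<close>-th exterior power is functorial) and makes \<open>G\<close> diagonal, with entries \<open>g\<^sub>i\<close>.
  For a \<open>k\<close>-element index set \<open>I\<close> with \<open>g\<^sub>I = \<Prod>\<^sub>i\<^sub>\<in>\<^sub>I g\<^sub>i \<noteq> \<beta>\<close>, the hypothesis says that
  \<open>\<And>\<^sup>k H\<close> maps \<open>e\<^sub>I\<close> to a nonzero multiple of itself, so \<open>H\<close> maps the span of the \<open>e\<^sub>i\<close>, \<open>i \<in> I\<close>,
  into itself.  Given \<open>g\<^sub>a \<noteq> g\<^sub>b\<close>, complete \<open>a\<close> and \<open>b\<close> by the same \<open>k - 1\<close> indices \<open>J\<close>, which is
  possible because \<open>k < n\<close>; as \<open>\<beta> \<noteq> 0\<close>, one of \<open>g\<^sub>a g\<^sub>J\<close> and \<open>g\<^sub>b g\<^sub>J\<close> differs from \<open>\<beta>\<close>, and together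
  with the symmetry of \<open>H\<close> this forces \<open>H\<^sub>a\<^sub>b = 0\<close>.  Hence \<open>G\<close> and \<open>H\<close> commute, and commuting
  symmetric matrices have a common orthonormal eigenbasis.  In that basis both are diagonal; if
  \<open>k \<ge> 2\<close> and \<open>g\<^sub>a = 0 = h\<^sub>c\<close>, evaluating the hypothesis at \<open>e\<^sub>I\<close> for a \<open>k\<close>-element \<open>I\<close> containing
  \<open>a\<close> and \<open>c\<close> gives \<open>0 = \<beta>\<close>.
\<close>

no_notation Matrix.vec_index (infixl "$" 100)
no_notation Matrix.scalar_prod (infix "\<bullet>" 70)
hide_const (open) Matrix.mat Determinant.det Matrix.row Matrix.col Matrix.orthogonal
hide_fact (open) Matrix.vec_eq_iff Matrix.orthogonal_def Matrix.row_def

lemma kdet_eq_det: "kdet k M = Determinant.det (Matrix.mat k k (\<lambda>(i, j). M i j))"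
  unfolding kdet_def
  by (subst det_def'[of _ k]) (auto simp: lessThan_atLeast0 intro!: sum.cong prod.cong)

lemma kdet_one: "kdet k (\<lambda>l j. if l = j then 1 else 0) = 1"
proof -
  have "Matrix.mat k k (\<lambda>(i, j). if i = j then 1 else (0::real)) = 1\<^sub>m k"
    by (auto simp: one_mat_def)
  then show ?thesis
    unfolding kdet_eq_det by simp
qed

text \<open>The left-hand side is the expansion along the first column of the
  \<open>(k+1) \<times> (k+1)\<close> matrix whose first column repeats column \<open>j\<close> of \<open>x\<close>.\<close>

lemma kdet_expansion_repeated_column:
  fixes x :: "nat \<Rightarrow> nat \<Rightarrow> real"
  assumes "j < k"
  shows "(\<Sum>t<Suc k. (-1) ^ t * x t j * kdet k (\<lambda>l c. x (if l < t then l else Suc l) c)) = 0"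
proof -
  define A where
    "A = Matrix.mat (Suc k) (Suc k) (\<lambda>(i, c). if c = 0 then x i j else x i (c - 1))"
  have A: "A \<in> carrier_mat (Suc k) (Suc k)"
    unfolding A_def by auto
  have "Determinant.det A = 0"
    by (rule det_identical_columns[OF A, of 0 "Suc j"]) (use assms in \<open>auto simp: A_def Matrix.col_def\<close>)
  moreover have "Determinant.det A = (\<Sum>t<Suc k. A $$ (t, 0) * cofactor A t 0)"
    by (rule laplace_expansion_column[OF A]) simp
  moreover have "A $$ (t, 0) * cofactor A t 0 =
      (-1) ^ t * x t j * kdet k (\<lambda>l c. x (if l < t then l else Suc l) c)" if "t < Suc k" for t
    unfolding cofactor_def kdet_eq_det using that
    by (auto simp: A_def mat_delete_def intro!: arg_cong[of _ _ Determinant.det])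
  ultimately show ?thesis
    by simp
qed

lemma kdet_cong:
  assumes "\<And>l j. l < k \<Longrightarrow> j < k \<Longrightarrow> M l j = N l j"
  shows "kdet k M = kdet k N"
  unfolding kdet_def
proof (intro sum.cong refl)
  fix p
  assume "p \<in> {p. p permutes {..<k}}"
  then have "p i < k" if "i < k" for i
    using permutes_in_image that by fastforce
  then show "of_int (sign p) * (\<Prod>i<k. M i (p i)) = of_int (sign p) * (\<Prod>i<k. N i (p i))"
    using assms by (auto intro!: prod.cong)
qed

lemma kdet_zero_row:
  assumes "l < k" and "\<And>j. j < k \<Longrightarrow> M l j = 0"
  shows "kdet k M = 0"
  unfolding kdet_def
proof (intro sum.neutral ballI)
  fix p
  assume "p \<in> {p. p permutes {..<k}}"
  then have "p l < k"
    using permutes_in_image assms(1) by fastforce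
  then have "(\<Prod>i<k. M i (p i)) = 0"
    using assms by (intro prod_zero) auto
  then show "of_int (sign p) * (\<Prod>i<k. M i (p i)) = 0"
    by simp
qed

lemma kdet_mult_columns: "kdet k (\<lambda>l j. c j * M l j) = (\<Prod>j<k. c j) * kdet k M"
  unfolding kdet_def sum_distrib_left
proof (intro sum.cong refl)
  fix p
  assume "p \<in> {p. p permutes {..<k}}"
  then have "(\<Prod>i<k. c (p i)) = (\<Prod>j<k. c j)"
    using prod.permute[of p "{..<k}" c] by (simp add: comp_def)
  then show "of_int (sign p) * (\<Prod>i<k. c (p i) * M i (p i)) =
      (\<Prod>j<k. c j) * (of_int (sign p) * (\<Prod>i<k. M i (p i)))"
    by (simp add: prod.distrib)
qed

lemma wedge_matrix_vector_mult:
  fixes A :: "real^'n^'n"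
  shows "wedge k (\<lambda>j. A *v w j) idx =
    (\<Sum>m\<in>PiE {..<k} (\<lambda>_. UNIV). (\<Prod>l<k. A $ idx l $ m l) * wedge k w m)"
proof -
  have "wedge k (\<lambda>j. A *v w j) idx =
      (\<Sum>p | p permutes {..<k}. of_int (sign p) * (\<Prod>i<k. \<Sum>m\<in>UNIV. A $ idx i $ m * w (p i) $ m))"
    unfolding wedge_def kdet_def by (simp add: matrix_vector_mult_def)
  also have "\<dots> = (\<Sum>p | p permutes {..<k}. of_int (sign p) *
      (\<Sum>m\<in>PiE {..<k} (\<lambda>_. UNIV). (\<Prod>l<k. A $ idx l $ m l) * (\<Prod>i<k. w (p i) $ m i)))"
    by (subst prod_sum_PiE) (auto simp: prod.distrib)
  also have "\<dots> = (\<Sum>m\<in>PiE {..<k} (\<lambda>_. UNIV). (\<Prod>l<k. A $ idx l $ m l) *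
      (\<Sum>p | p permutes {..<k}. of_int (sign p) * (\<Prod>i<k. w (p i) $ m i)))"
    unfolding sum_distrib_left by (subst sum.swap) (auto intro!: sum.cong)
  finally show ?thesis
    unfolding wedge_def kdet_def .
qed

lemma ext_pow_sum_eq_conjugate:
  fixes G H P Q :: "real^'n^'n"
  assumes E: "ext_pow_sum_eq k G H \<beta>" and QP: "Q ** P = mat 1"
  shows "ext_pow_sum_eq k (Q ** G ** P) (Q ** H ** P) \<beta>"
  unfolding ext_pow_sum_eq_def
proof (intro allI)
  fix v :: "nat \<Rightarrow> real^'n" and idx
  let ?Q = "\<lambda>m. \<Prod>l<k. Q $ idx l $ m l"
  have conj: "ext_pow_app k (Q ** A ** P) v idx =
      (\<Sum>m\<in>PiE {..<k} (\<lambda>_. UNIV). ?Q m * ext_pow_app k A (\<lambda>j. P *v v j) m)" for A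
    unfolding ext_pow_app_def by (simp add: matrix_vector_mul_assoc[symmetric] wedge_matrix_vector_mult)
  have "ext_pow_app k (Q ** G ** P) v idx + ext_pow_app k (Q ** H ** P) v idx =
      (\<Sum>m\<in>PiE {..<k} (\<lambda>_. UNIV). ?Q m * (\<beta> * wedge k (\<lambda>j. P *v v j) m))"
    unfolding conj sum.distrib[symmetric] distrib_left[symmetric]
    using E unfolding ext_pow_sum_eq_def ext_pow_app_def by (simp add: matrix_vector_mul_lid)
  also have "\<dots> = \<beta> * wedge k (\<lambda>j. Q *v (P *v v j)) idx"
    by (simp add: wedge_matrix_vector_mult sum_distrib_left ac_simps)
  also have "\<dots> = \<beta> * ext_pow_app k (mat 1) v idx"
    by (simp add: ext_pow_app_def matrix_vector_mul_assoc QP matrix_vector_mul_lid)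
  finally show "ext_pow_app k (Q ** G ** P) v idx + ext_pow_app k (Q ** H ** P) v idx =
      \<beta> * ext_pow_app k (mat 1) v idx" .
qed

lemma wedge_axis_distinct:
  assumes "distinct I" and "length I = k"
  shows "wedge k (\<lambda>j. axis (I ! j) (1::real)) (\<lambda>l. I ! l) = 1"
proof -
  have "wedge k (\<lambda>j. axis (I ! j) (1::real)) (\<lambda>l. I ! l) = kdet k (\<lambda>l j. if l = j then 1 else 0)"
    unfolding wedge_def
    by (rule kdet_cong) (use assms in \<open>auto simp: axis_def nth_eq_iff_index_eq\<close>)
  then show ?thesis
    by (simp add: kdet_one)
qed

lemma wedge_axis_missing:
  assumes "l < k" and "idx l \<notin> set I" and "length I = k"
  shows "wedge k (\<lambda>j. axis (I ! j) (1::real)) idx = 0"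
  unfolding wedge_def
  by (rule kdet_zero_row[OF assms(1)]) (use assms in \<open>auto simp: axis_def\<close>)

definition diag_mat :: "('n \<Rightarrow> 'a::zero) \<Rightarrow> 'a^'n^'n" where
  "diag_mat g = (\<chi> i j. if i = j then g i else 0)"

lemma diag_mat_mult_axis: "diag_mat g *v axis i 1 = g i *\<^sub>R axis i (1::real)"
  unfolding matrix_vector_mult_basis by (simp add: column_def vec_eq_iff diag_mat_def axis_def)

lemma matrix_mul_diag_mat:
  fixes M :: "'a::semiring_1^'n^'n"
  shows "(M ** diag_mat g) $ a $ b = M $ a $ b * g b"
    and "(diag_mat g ** M) $ a $ b = g a * M $ a $ b"
  by (simp_all add: matrix_matrix_mult_def diag_mat_def mult_ac if_distrib[of "\<lambda>x. x * _"] if_distrib[of "\<lambda>x. _ * x"] cong: if_cong)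
lemma det_diag_mat: "det (diag_mat g :: 'a::comm_ring_1^'n^'n) = (\<Prod>i\<in>UNIV. g i)"
  by (subst det_diagonal) (simp_all add: diag_mat_def)

lemma ext_pow_app_diag_mat_axis:
  "ext_pow_app k (diag_mat g) (\<lambda>j. axis (I j) 1) idx =
    (\<Prod>j<k. g (I j)) * wedge k (\<lambda>j. axis (I j) 1) idx"
  unfolding ext_pow_app_def wedge_def diag_mat_mult_axis
  using kdet_mult_columns[where c = "\<lambda>j. g (I j)" and M = "\<lambda>l j. axis (I j) 1 $ idx l"]
  by simp

lemma exists_distinct_list_avoiding:
  fixes F :: "'n::finite set"
  assumes "m + card F \<le> CARD('n)"
  obtains xs :: "'n list" where "distinct xs" "length xs = m" "set xs \<inter> F = {}"
proof -
  have "m \<le> card (UNIV - F)"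
    using assms by (simp add: card_Diff_subset)
  then obtain T where T: "T \<subseteq> UNIV - F" "card T = m"
    using obtain_subset_with_card_n by metis
  obtain xs where "set xs = T" "distinct xs"
    using finite_distinct_list[of T] by auto
  with T show ?thesis
    using that distinct_card by fastforce
qed

lemma exists_distinct_list_containing:
  fixes a c :: "'n::finite"
  assumes "2 \<le> k" and "k \<le> CARD('n)"
  obtains I :: "'n list" where "distinct I" "length I = k" "a \<in> set I" "c \<in> set I"
proof -
  have "card {a, c} \<le> k"
    using assms(1) card_insert_le_m1[of 2 "{c}" a] by simp
  then obtain T where T: "{a, c} \<subseteq> T" "card T = k"
    using exists_subset_between[of "{a, c}" k UNIV] assms(2) by auto
  obtain I where "set I = T" "distinct I"
    using finite_distinct_list[of T] by auto
  with T show ?thesis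
    using that distinct_card by fastforce
qed

text \<open>By hypothesis the wedge of the vectors \<open>M e\<^sub>i\<close>, \<open>i \<in> I\<close>, is a nonzero multiple of \<open>e\<^sub>I\<close>.
  So the determinant with rows \<open>r # I\<close> and columns \<open>M e\<^bsub>I!j\<^esub>\<close> followed by these vectors
  vanishes, and its expansion along the first column leaves only the entry \<open>r\<close> of \<open>M e\<^bsub>I!j\<^esub>\<close>
  times that multiple.\<close>

lemma ext_pow_sum_eq_diag_entry_zero:
  fixes M :: "real^'n^'n"
  assumes E: "ext_pow_sum_eq k (diag_mat g) M \<beta>"
    and I: "distinct I" "length I = k"
    and r: "r \<notin> set I" and j: "j < k"
    and ne: "(\<Prod>j<k. g (I ! j)) \<noteq> \<beta>"
  shows "M $ r $ (I ! j) = 0"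
proof -
  define c where "c = \<beta> - (\<Prod>j<k. g (I ! j))"
  define w where "w = (\<lambda>j. M *v axis (I ! j) 1)"
  define e where "e = (\<lambda>j. axis (I ! j) (1::real))"
  have w: "wedge k w idx = c * wedge k e idx" for idx
  proof -
    have "ext_pow_app k (diag_mat g) e idx + ext_pow_app k M e idx = \<beta> * ext_pow_app k (mat 1) e idx"
      using E unfolding ext_pow_sum_eq_def by blast
    then show ?thesis
      unfolding c_def w_def e_def ext_pow_app_diag_mat_axis
      by (simp add: ext_pow_app_def algebra_simps)
  qed
  define rows where "rows = (\<lambda>t. (r # I) ! t)"
  define minor where "minor t = (\<lambda>l. rows (if l < t then l else Suc l))" for t
  have minor: "kdet k (\<lambda>l i. w i $ minor t l) = c * wedge k e (minor t)" for t
    using w[of "minor t"] unfolding wedge_def by simp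
  have "wedge k e (minor (Suc t)) = 0" for t
    unfolding e_def by (rule wedge_axis_missing[of 0]) (use j r I in \<open>auto simp: minor_def rows_def\<close>)
  moreover have "wedge k e (minor 0) = 1"
    unfolding e_def minor_def rows_def using wedge_axis_distinct[OF I] by simp
  moreover have "(\<Sum>t<Suc k. (-1) ^ t * w j $ rows t * kdet k (\<lambda>l i. w i $ minor t l)) = 0"
    unfolding minor_def using kdet_expansion_repeated_column[OF j, of "\<lambda>t i. w i $ rows t"] by simp
  ultimately have "w j $ r * c = 0"
    by (simp add: minor sum.lessThan_Suc_shift rows_def del: sum.lessThan_Suc)
  then show ?thesis
    using ne by (simp add: c_def w_def matrix_vector_mult_basis column_def)
qed

lemma ext_pow_sum_eq_diag_offdiag_zero:
  fixes M :: "real^'n^'n"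
  assumes E: "ext_pow_sum_eq k (diag_mat g) M \<beta>" and M: "transpose M = M"
    and "\<beta> \<noteq> 0" and "1 \<le> k" and "k \<le> CARD('n) - 1"
    and gab: "g a \<noteq> g b"
  shows "M $ a $ b = 0"
proof -
  have "(k - 1) + card {a, b} \<le> CARD('n)"
    using assms(4,5) gab by (auto simp: card_insert_if)
  then obtain xs where xs: "distinct xs" "length xs = k - 1" "set xs \<inter> {a, b} = {}"
    by (rule exists_distinct_list_avoiding)
  define p where "p = (\<Prod>j<k - 1. g (xs ! j))"
  have entry_zero: "M $ r $ i = 0" if "i \<in> {a, b}" "r \<in> {a, b}" "r \<noteq> i" "g i * p \<noteq> \<beta>" for r i
  proof -
    obtain k' where k: "k = Suc k'"
      using assms(4) by (cases k) auto
    have "(\<Prod>j<k. g ((i # xs) ! j)) = g i * p"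
      unfolding p_def k by (simp add: prod.lessThan_Suc_shift del: prod.lessThan_Suc)
    then show ?thesis
      using ext_pow_sum_eq_diag_entry_zero[OF E, of "i # xs" r 0] xs that assms(4) by auto
  qed
  have "g b * p \<noteq> \<beta> \<or> g a * p \<noteq> \<beta>"
    using \<open>\<beta> \<noteq> 0\<close> gab by auto
  moreover have "M $ a $ b = M $ b $ a"
    using M by (metis transpose_def vec_lambda_beta)
  ultimately show ?thesis
    using entry_zero gab by fastforce
qed

lemma ext_pow_sum_eq_diag_commute:
  fixes M :: "real^'n^'n"
  assumes "ext_pow_sum_eq k (diag_mat g) M \<beta>" and "transpose M = M"
    and "\<beta> \<noteq> 0" and "1 \<le> k" and "k \<le> CARD('n) - 1"
  shows "M ** diag_mat g = diag_mat g ** M"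
proof -
  have "(M ** diag_mat g) $ a $ b = (diag_mat g ** M) $ a $ b" for a b
    using ext_pow_sum_eq_diag_offdiag_zero[OF assms, of a b]
    by (cases "g a = g b") (simp_all add: matrix_mul_diag_mat)
  then show ?thesis
    by (simp add: vec_eq_iff)
qed

lemma ext_pow_sum_eq_diag_nonsingular:
  fixes h :: "'n::finite \<Rightarrow> real"
  assumes E: "ext_pow_sum_eq k (diag_mat g) (diag_mat h) \<beta>"
    and "\<beta> \<noteq> 0" and "2 \<le> k" and "k \<le> CARD('n)"
  shows "(\<forall>i. g i \<noteq> 0) \<or> (\<forall>i. h i \<noteq> 0)"
proof (rule ccontr)
  assume "\<not> ?thesis"
  then obtain a c where "g a = 0" "h c = 0"
    by auto
  obtain I where I: "distinct I" "length I = k" "a \<in> set I" "c \<in> set I"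
    using exists_distinct_list_containing[OF assms(3,4)] by blast
  have vanish: "(\<Prod>j<k. f (I ! j)) = 0" if "x \<in> set I" "f x = 0" for f :: "'n \<Rightarrow> real" and x
    using that I(2) by (metis in_set_conv_nth lessThan_iff prod_zero_iff finite_lessThan)
  let ?e = "\<lambda>j. axis (I ! j) (1::real)"
  have "ext_pow_app k (diag_mat g) ?e ((!) I) + ext_pow_app k (diag_mat h) ?e ((!) I) =
      \<beta> * ext_pow_app k (mat 1) ?e ((!) I)"
    using E unfolding ext_pow_sum_eq_def by blast
  then have "\<beta> * wedge k ?e ((!) I) = 0"
    unfolding ext_pow_app_diag_mat_axis
    using vanish[of a g] vanish[of c h] I \<open>g a = 0\<close> \<open>h c = 0\<close> by (simp add: ext_pow_app_def)
  then show False
    using wedge_axis_distinct[OF I(1,2)] \<open>\<beta> \<noteq> 0\<close> by simp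
qed

lemma symmetric_matrix_inner:
  fixes A :: "real^'n^'n"
  assumes "transpose A = A"
  shows "(A *v x) \<bullet> y = x \<bullet> (A *v y)"
  by (metis assms dot_lmul_matrix transpose_matrix_vector)

lemma linear_coeff_zero_if_quadratic_nonneg:
  fixes p c :: real
  assumes "\<And>t. 0 \<le> 2 * t * p + t\<^sup>2 * c"
  shows "p = 0"
proof -
  define d where "d = \<bar>c\<bar> + 1"
  have d: "d > 0" "c \<le> d - 1"
    unfolding d_def by auto
  have "0 \<le> 2 * (- p / d) * p + (- p / d)\<^sup>2 * c"
    by (rule assms)
  also have "\<dots> \<le> 2 * (- p / d) * p + (- p / d)\<^sup>2 * (d - 1)"
    using d by (intro add_left_mono mult_left_mono) auto
  also have "\<dots> = - p\<^sup>2 * (d + 1) / d\<^sup>2"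
    using d by (simp add: field_simps power2_eq_square)
  finally have "p\<^sup>2 * (d + 1) \<le> 0"
    using d by (simp add: divide_le_0_iff)
  then show ?thesis
    using d by (auto simp: mult_le_0_iff)
qed

text \<open>The quadratic form \<open>z \<mapsto> l |z|\<^sup>2 - z \<bullet> A z\<close> is nonnegative on \<open>S\<close> and vanishes at \<open>x\<close>,
  so its polarisation at \<open>x\<close> vanishes on \<open>S\<close>; testing it with \<open>u = l x - A x\<close> gives \<open>u = 0\<close>.\<close>

lemma rayleigh_maximizer_eigenvector:
  fixes A :: "real^'n^'n"
  assumes A: "transpose A = A" and S: "subspace S" and inv: "\<And>z. z \<in> S \<Longrightarrow> A *v z \<in> S"
    and x: "x \<in> S" and bound: "\<And>z. z \<in> S \<Longrightarrow> z \<bullet> (A *v z) \<le> l * (z \<bullet> z)"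
    and attained: "x \<bullet> (A *v x) = l * (x \<bullet> x)"
  shows "A *v x = l *\<^sub>R x"
proof -
  define u where "u = l *\<^sub>R x - A *v x"
  have u: "u \<in> S"
    unfolding u_def using S x inv by (simp add: subspace_diff subspace_scale)
  have uu: "l * (u \<bullet> x) - u \<bullet> (A *v x) = u \<bullet> u"
    using u_def by (simp add: inner_diff_right)
  have sym: "x \<bullet> (A *v u) = u \<bullet> (A *v x)"
    using symmetric_matrix_inner[OF A, of u x] by (simp add: inner_commute)
  have "0 \<le> 2 * t * (u \<bullet> u) + t\<^sup>2 * (l * (u \<bullet> u) - u \<bullet> (A *v u))" for t
  proof -
    have "0 \<le> l * ((x + t *\<^sub>R u) \<bullet> (x + t *\<^sub>R u)) - (x + t *\<^sub>R u) \<bullet> (A *v (x + t *\<^sub>R u))"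
      using bound S x u by (simp add: subspace_add subspace_scale)
    also have "\<dots> = 2 * t * (l * (u \<bullet> x) - u \<bullet> (A *v x)) + t\<^sup>2 * (l * (u \<bullet> u) - u \<bullet> (A *v u))"
      using attained sym
      by (simp add: matrix_vector_right_distrib matrix_vector_mult_scaleR inner_add_left
          inner_add_right inner_commute[of x u] power2_eq_square algebra_simps)
    finally show ?thesis
      unfolding uu .
  qed
  then have "u \<bullet> u = 0"
    by (rule linear_coeff_zero_if_quadratic_nonneg)
  then show ?thesis
    unfolding u_def by simp
qed

lemma symmetric_matrix_eigenvector_in_subspace:
  fixes A :: "real^'n^'n"
  assumes A: "transpose A = A" and S: "subspace S" and inv: "\<And>z. z \<in> S \<Longrightarrow> A *v z \<in> S"
    and "S \<noteq> {0}"
  obtains x l where "x \<in> S" "x \<noteq> 0" "A *v x = l *\<^sub>R x"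
proof -
  define T where "T = S \<inter> sphere 0 1"
  have "compact T"
    unfolding T_def by (intro closed_Int_compact closed_subspace S compact_sphere)
  obtain x0 where x0: "x0 \<in> S" "x0 \<noteq> 0"
    using assms(4) S subspace_0 by blast
  then have "x0 /\<^sub>R norm x0 \<in> T"
    using S by (auto simp: T_def subspace_scale)
  then have "T \<noteq> {}"
    by blast
  have "continuous_on T (\<lambda>z. z \<bullet> (A *v z))"
    by (intro continuous_intros matrix_vector_mult_linear_continuous_on)
  then obtain x where x: "x \<in> T" and max: "\<And>y. y \<in> T \<Longrightarrow> y \<bullet> (A *v y) \<le> x \<bullet> (A *v x)"
    using continuous_attains_sup[OF \<open>compact T\<close> \<open>T \<noteq> {}\<close>] by blast
  define l where "l = x \<bullet> (A *v x)"
  have xS: "x \<in> S" and xx: "x \<bullet> x = 1"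
    using x by (auto simp: T_def dot_square_norm)
  have "z \<bullet> (A *v z) \<le> l * (z \<bullet> z)" if "z \<in> S" for z
  proof (cases "z = 0")
    case False
    have "z /\<^sub>R norm z \<in> T"
      using that S False by (auto simp: T_def subspace_scale)
    then have "(z /\<^sub>R norm z) \<bullet> (A *v (z /\<^sub>R norm z)) \<le> l"
      using max l_def by blast
    then show ?thesis
      using False by (simp add: matrix_vector_mult_scaleR dot_square_norm field_simps power2_eq_square)
  qed simp
  then have "A *v x = l *\<^sub>R x"
    using rayleigh_maximizer_eigenvector[OF A S inv xS] by (simp add: l_def xx)
  moreover have "x \<noteq> 0"
    using xx by auto
  ultimately show ?thesis
    using that xS by blast
qed

lemma commuting_symmetric_common_eigenvector:
  fixes G H :: "real^'n^'n"
  assumes G: "transpose G = G" and H: "transpose H = H" and GH: "G ** H = H ** G"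
    and S: "subspace S" and GS: "\<And>z. z \<in> S \<Longrightarrow> G *v z \<in> S"
    and HS: "\<And>z. z \<in> S \<Longrightarrow> H *v z \<in> S" and "S \<noteq> {0}"
  obtains y c d where "y \<in> S" "norm y = 1" "G *v y = c *\<^sub>R y" "H *v y = d *\<^sub>R y"
proof -
  obtain x c where x: "x \<in> S" "x \<noteq> 0" "G *v x = c *\<^sub>R x"
    using symmetric_matrix_eigenvector_in_subspace[OF G S GS \<open>S \<noteq> {0}\<close>] .
  define E where "E = {y \<in> S. G *v y = c *\<^sub>R y}"
  have E: "subspace E"
    using S unfolding E_def subspace_def
    by (simp add: matrix_vector_right_distrib matrix_vector_mult_scaleR scaleR_add_right)
  have HE: "H *v y \<in> E" if "y \<in> E" for y
  proof -
    have "G *v (H *v y) = H *v (G *v y)"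
      by (simp add: matrix_vector_mul_assoc GH)
    then show ?thesis
      using that HS unfolding E_def by (simp add: matrix_vector_mult_scaleR)
  qed
  have "E \<noteq> {0}"
    using x unfolding E_def by blast
  then obtain y d where y: "y \<in> E" "y \<noteq> 0" "H *v y = d *\<^sub>R y"
    using symmetric_matrix_eigenvector_in_subspace[OF H E HE] by blast
  show ?thesis
  proof (rule that[of "y /\<^sub>R norm y" c d])
    show "y /\<^sub>R norm y \<in> S"
      using y S unfolding E_def by (simp add: subspace_scale)
    show "norm (y /\<^sub>R norm y) = 1"
      using y by simp
    show "G *v (y /\<^sub>R norm y) = c *\<^sub>R (y /\<^sub>R norm y)"
      using y unfolding E_def by (simp add: matrix_vector_mult_scaleR)
    show "H *v (y /\<^sub>R norm y) = d *\<^sub>R (y /\<^sub>R norm y)"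
      using y by (simp add: matrix_vector_mult_scaleR)
  qed
qed

lemma subspace_orthogonal_slice:
  "subspace S \<Longrightarrow> subspace {z \<in> S. z \<bullet> y = 0}"
  by (auto simp: subspace_def inner_add_left)

lemma dim_orthogonal_slice_less:
  fixes y :: "'a::euclidean_space"
  assumes S: "subspace S" and "y \<in> S" and "y \<noteq> 0"
  shows "dim {z \<in> S. z \<bullet> y = 0} < dim S"
proof (rule dim_psubset)
  have "y \<notin> {z \<in> S. z \<bullet> y = 0}"
    using assms by simp
  then have "{z \<in> S. z \<bullet> y = 0} \<subset> S"
    using assms by blast
  moreover have "span S = S"
    using S by (rule span_eq_iff[THEN iffD2])
  moreover have "span {z \<in> S. z \<bullet> y = 0} = {z \<in> S. z \<bullet> y = 0}"
    using subspace_orthogonal_slice[OF S] by (rule span_eq_iff[THEN iffD2])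
  ultimately show "span {z \<in> S. z \<bullet> y = 0} \<subset> span S"
    by (simp only:)
qed

lemma span_insert_orthogonal_slice:
  assumes S: "subspace S" and y: "y \<in> S" "y \<bullet> y = 1"
    and B: "span B = {z \<in> S. z \<bullet> y = 0}"
  shows "span (insert y B) = S"
proof
  have "B \<subseteq> S"
    using B span_superset by blast
  then show "span (insert y B) \<subseteq> S"
    using S y by (simp add: span_minimal)
  show "S \<subseteq> span (insert y B)"
  proof
    fix z
    assume z: "z \<in> S"
    have "z - (z \<bullet> y) *\<^sub>R y \<in> span B"
      unfolding B using z y S by (simp add: subspace_diff subspace_scale inner_diff_left)
    then have "z - (z \<bullet> y) *\<^sub>R y \<in> span (insert y B)"
      by (meson span_mono subset_insertI subsetD)
    moreover have "(z \<bullet> y) *\<^sub>R y \<in> span (insert y B)"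
      by (simp add: span_base span_scale)
    ultimately show "z \<in> span (insert y B)"
      using span_add by fastforce
  qed
qed

lemma symmetric_matrix_preserves_orthogonal_slice:
  fixes A :: "real^'n^'n"
  assumes "transpose A = A" and "\<And>z. z \<in> S \<Longrightarrow> A *v z \<in> S" and "A *v y = c *\<^sub>R y"
    and "z \<in> {z \<in> S. z \<bullet> y = 0}"
  shows "A *v z \<in> {z \<in> S. z \<bullet> y = 0}"
  using assms symmetric_matrix_inner[OF assms(1), of z y] by simp

lemma commuting_symmetric_orthonormal_eigenset:
  fixes G H :: "real^'n^'n"
  assumes G: "transpose G = G" and H: "transpose H = H" and GH: "G ** H = H ** G"
  shows "subspace S \<Longrightarrow> (\<And>z. z \<in> S \<Longrightarrow> G *v z \<in> S) \<Longrightarrow> (\<And>z. z \<in> S \<Longrightarrow> H *v z \<in> S) \<Longrightarrow>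
    \<exists>B. span B = S \<and> pairwise orthogonal B \<and>
      (\<forall>x\<in>B. norm x = 1 \<and> (\<exists>c. G *v x = c *\<^sub>R x) \<and> (\<exists>d. H *v x = d *\<^sub>R x))"
proof (induction "dim S" arbitrary: S rule: less_induct)
  case less
  show ?case
  proof (cases "S = {0}")
    case True
    then show ?thesis
      by (intro exI[of _ "{}"]) auto
  next
    case False
    obtain y c d where y: "y \<in> S" "norm y = 1" "G *v y = c *\<^sub>R y" "H *v y = d *\<^sub>R y"
      using commuting_symmetric_common_eigenvector[OF G H GH less.prems False] .
    let ?S' = "{z \<in> S. z \<bullet> y = 0}"
    have "y \<noteq> 0"
      using y(2) by auto
    then have "dim ?S' < dim S"
      by (rule dim_orthogonal_slice_less[OF less.prems(1) y(1)])
    moreover have "\<And>z. z \<in> ?S' \<Longrightarrow> G *v z \<in> ?S'" "\<And>z. z \<in> ?S' \<Longrightarrow> H *v z \<in> ?S'"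
      using symmetric_matrix_preserves_orthogonal_slice[OF G less.prems(2) y(3)]
        symmetric_matrix_preserves_orthogonal_slice[OF H less.prems(3) y(4)] by blast+
    ultimately obtain B where B: "span B = ?S'" "pairwise orthogonal B"
        "\<forall>x\<in>B. norm x = 1 \<and> (\<exists>c. G *v x = c *\<^sub>R x) \<and> (\<exists>d. H *v x = d *\<^sub>R x)"
      using less.hyps[of ?S'] subspace_orthogonal_slice[OF less.prems(1)] by blast
    have "y \<bullet> y = 1"
      using y(2) by (simp add: dot_square_norm)
    then have "span (insert y B) = S"
      using span_insert_orthogonal_slice[OF less.prems(1) y(1) _ B(1)] by blast
    moreover have "pairwise orthogonal (insert y B)"
      using B(1,2) span_superset[of B]
      by (auto simp: pairwise_insert orthogonal_def inner_commute)
    ultimately show ?thesis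
      using B(3) y by blast
  qed
qed

lemma commuting_symmetric_orthonormal_eigenbasis:
  fixes G H :: "real^'n^'n"
  assumes G: "transpose G = G" and H: "transpose H = H" and GH: "G ** H = H ** G"
  obtains b :: "'n \<Rightarrow> real^'n" and g h
  where "\<And>i j. b i \<bullet> b j = (if i = j then 1 else 0)"
    and "\<And>i. G *v b i = g i *\<^sub>R b i" and "\<And>i. H *v b i = h i *\<^sub>R b i"
proof -
  obtain B where B: "span B = UNIV" "pairwise orthogonal B"
      "\<forall>x\<in>B. norm x = 1 \<and> (\<exists>c. G *v x = c *\<^sub>R x) \<and> (\<exists>d. H *v x = d *\<^sub>R x)"
    using commuting_symmetric_orthonormal_eigenset[OF G H GH, of UNIV] by auto
  then have "0 \<notin> B"
    by auto
  then have "independent B"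
    using B(2) pairwise_orthogonal_independent by blast
  then have "finite B" "CARD('n) = card B"
    using dim_span_eq_card_independent[of B] B(1) by (auto simp: finiteI_independent)
  then obtain b where b: "bij_betw b (UNIV :: 'n set) B"
    using finite_same_card_bij[OF finite_class.finite_UNIV] by blast
  then have bB: "b i \<in> B" for i
    by (auto simp: bij_betw_def)
  have "b i \<bullet> b j = (if i = j then 1 else 0)" for i j
  proof (cases "i = j")
    case True
    then show ?thesis
      using B(3) bB[of i] by (simp add: dot_square_norm)
  next
    case False
    then have "b i \<noteq> b j"
      using b by (auto simp: bij_betw_def inj_on_def)
    then show ?thesis
      using B(2) bB False by (auto simp: pairwise_def orthogonal_def)
  qed
  moreover have "\<forall>i. \<exists>c. G *v b i = c *\<^sub>R b i" "\<forall>i. \<exists>d. H *v b i = d *\<^sub>R b i"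
    using B(3) bB by blast+
  then obtain g h where "\<And>i. G *v b i = g i *\<^sub>R b i" "\<And>i. H *v b i = h i *\<^sub>R b i"
    unfolding choice_iff by blast
  ultimately show ?thesis
    using that by blast
qed

lemma symmetric_matrix_orthonormal_eigenbasis:
  fixes A :: "real^'n^'n"
  assumes "transpose A = A"
  obtains b :: "'n \<Rightarrow> real^'n" and a
  where "\<And>i j. b i \<bullet> b j = (if i = j then 1 else 0)" and "\<And>i. A *v b i = a i *\<^sub>R b i"
  by (rule commuting_symmetric_orthonormal_eigenbasis[OF assms assms refl]) (rule that)

lemma orthogonal_matrix_of_orthonormal_rows:
  fixes b :: "'n \<Rightarrow> real^'n"
  assumes "\<And>i j. b i \<bullet> b j = (if i = j then 1 else 0)"
  shows "orthogonal_matrix (\<chi> i. b i)"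
  using assms by (auto simp: orthogonal_matrix_orthonormal_rows row_def norm_eq_1 orthogonal_def)

lemma orthonormal_eigenbasis_diagonalizes:
  fixes A :: "real^'n^'n" and b :: "'n \<Rightarrow> real^'n"
  assumes ortho: "\<And>i j. b i \<bullet> b j = (if i = j then 1 else 0)"
    and eigen: "\<And>i. A *v b i = a i *\<^sub>R b i"
  shows "(\<chi> i. b i) ** A ** transpose (\<chi> i. b i) = diag_mat a"
proof -
  have rows: "(\<chi> i. b i) *v v = (\<chi> i. b i \<bullet> v)" for v
    by (simp add: vec_eq_iff matrix_vector_mult_def inner_vec_def)
  have col: "transpose (\<chi> i. b i) *v axis j 1 = b j" for j
    by (simp add: matrix_vector_mult_basis row_def)
  have entry: "X $ i $ j = (X *v axis j 1) $ i" for X :: "real^'n^'n" and i j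
    by (simp add: matrix_vector_mult_basis column_def)
  have "((\<chi> i. b i) ** A ** transpose (\<chi> i. b i)) *v axis j 1 = (\<chi> i. b i) *v (A *v b j)" for j
    by (simp only: matrix_vector_mul_assoc[symmetric] col)
  also have "\<dots> j = a j *\<^sub>R axis j 1" for j
    by (simp add: eigen rows matrix_vector_mult_scaleR ortho vec_eq_iff axis_def)
  also have "\<dots> j = diag_mat a *v axis j 1" for j
    by (rule diag_mat_mult_axis[symmetric])
  finally show ?thesis
    by (simp add: vec_eq_iff entry[of "_ ** _"] entry[of "diag_mat a"])
qed

lemma orthogonal_conjugates_commute:
  fixes Q A B :: "real^'n^'n"
  assumes Q: "orthogonal_matrix Q"
    and AB: "(Q ** A ** transpose Q) ** (Q ** B ** transpose Q) =
      (Q ** B ** transpose Q) ** (Q ** A ** transpose Q)"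
  shows "A ** B = B ** A"
proof -
  have cancel: "X ** transpose Q ** Q = X" for X :: "real^'n^'n"
    using Q by (simp add: orthogonal_matrix_def matrix_mul_assoc[symmetric])
  have unconj: "transpose Q ** ((Q ** X ** transpose Q) ** (Q ** Y ** transpose Q)) ** Q = X ** Y"
    for X Y :: "real^'n^'n"
    using Q by (simp add: orthogonal_matrix_def matrix_mul_assoc cancel)
  have "A ** B = transpose Q ** ((Q ** A ** transpose Q) ** (Q ** B ** transpose Q)) ** Q"
    by (rule unconj[symmetric])
  also have "\<dots> = transpose Q ** ((Q ** B ** transpose Q) ** (Q ** A ** transpose Q)) ** Q"
    by (simp only: AB)
  also have "\<dots> = B ** A"
    by (rule unconj)
  finally show ?thesis .
qed

lemma det_orthogonal_conjugate:
  fixes Q A :: "real^'n^'n"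
  assumes "orthogonal_matrix Q"
  shows "det (Q ** A ** transpose Q) = det A"
  using det_orthogonal_matrix[OF assms] by (auto simp: det_mul det_transpose)

lemma ext_pow_sum_eq_conjugate_eigenbasis:
  fixes G H :: "real^'n^'n" and b :: "'n \<Rightarrow> real^'n"
  assumes ortho: "\<And>i j. b i \<bullet> b j = (if i = j then 1 else 0)"
    and eigen: "\<And>i. G *v b i = g i *\<^sub>R b i" and E: "ext_pow_sum_eq k G H \<beta>"
  shows "ext_pow_sum_eq k (diag_mat g) ((\<chi> i. b i) ** H ** transpose (\<chi> i. b i)) \<beta>"
proof -
  have "(\<chi> i. b i) ** transpose (\<chi> i. b i) = mat 1"
    using orthogonal_matrix_of_orthonormal_rows[OF ortho] by (simp add: orthogonal_matrix_def)
  from ext_pow_sum_eq_conjugate[OF E this] show ?thesis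
    unfolding orthonormal_eigenbasis_diagonalizes[OF ortho eigen] .
qed

lemma ext_pow_sum_eq_commute:
  fixes G H :: "real^'n^'n"
  assumes G: "transpose G = G" and H: "transpose H = H"
    and "\<beta> \<noteq> 0" and "1 \<le> k" and "k \<le> CARD('n) - 1"
    and E: "ext_pow_sum_eq k G H \<beta>"
  shows "G ** H = H ** G"
proof -
  obtain b :: "'n \<Rightarrow> real^'n" and g where ortho: "\<And>i j. b i \<bullet> b j = (if i = j then 1 else 0)"
    and eigen: "\<And>i. G *v b i = g i *\<^sub>R b i"
    using symmetric_matrix_orthonormal_eigenbasis[OF G] by blast
  define Q where "Q = (\<chi> i. b i)"
  define M where "M = Q ** H ** transpose Q"
  have "ext_pow_sum_eq k (diag_mat g) M \<beta>"
    unfolding M_def Q_def by (rule ext_pow_sum_eq_conjugate_eigenbasis[OF ortho eigen E])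
  moreover have "transpose M = M"
    unfolding M_def using H by (simp add: matrix_transpose_mul matrix_mul_assoc)
  ultimately have "M ** diag_mat g = diag_mat g ** M"
    using ext_pow_sum_eq_diag_commute assms(3-5) by blast
  moreover have "Q ** G ** transpose Q = diag_mat g"
    unfolding Q_def by (rule orthonormal_eigenbasis_diagonalizes[OF ortho eigen])
  ultimately have "(Q ** G ** transpose Q) ** (Q ** H ** transpose Q) =
      (Q ** H ** transpose Q) ** (Q ** G ** transpose Q)"
    unfolding M_def by simp
  then show ?thesis
    using orthogonal_conjugates_commute orthogonal_matrix_of_orthonormal_rows[OF ortho]
    unfolding Q_def by blast
qed

lemma ext_pow_sum_eq_invertible:
  fixes G H :: "real^'n^'n" and b :: "'n \<Rightarrow> real^'n"
  assumes ortho: "\<And>i j. b i \<bullet> b j = (if i = j then 1 else 0)"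
    and eigG: "\<And>i. G *v b i = g i *\<^sub>R b i" and eigH: "\<And>i. H *v b i = h i *\<^sub>R b i"
    and "\<beta> \<noteq> 0" and "2 \<le> k" and "k \<le> CARD('n)"
    and E: "ext_pow_sum_eq k G H \<beta>"
  shows "invertible G \<or> invertible H"
proof -
  have "ext_pow_sum_eq k (diag_mat g) (diag_mat h) \<beta>"
    using ext_pow_sum_eq_conjugate_eigenbasis[OF ortho eigG E]
    unfolding orthonormal_eigenbasis_diagonalizes[OF ortho eigH] .
  then have "(\<forall>i. g i \<noteq> 0) \<or> (\<forall>i. h i \<noteq> 0)"
    using ext_pow_sum_eq_diag_nonsingular assms(4-6) by blast
  moreover have Q: "orthogonal_matrix (\<chi> i. b i)"
    by (rule orthogonal_matrix_of_orthonormal_rows[OF ortho])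
  have "det G = (\<Prod>i\<in>UNIV. g i)" "det H = (\<Prod>i\<in>UNIV. h i)"
    using det_orthogonal_conjugate[OF Q, of G] det_orthogonal_conjugate[OF Q, of H]
    unfolding orthonormal_eigenbasis_diagonalizes[OF ortho eigG]
      orthonormal_eigenbasis_diagonalizes[OF ortho eigH] det_diag_mat by simp_all
  ultimately show ?thesis
    by (auto simp: invertible_det_nz)
qed

theorem lemma3p2:
  fixes G H :: "real^'n^'n" and \<beta> :: real and k :: nat
  assumes "transpose G = G" and "transpose H = H"
    and "\<beta> \<noteq> 0"
    and "1 \<le> k" and "k \<le> CARD('n) - 1"
    and "ext_pow_sum_eq k G H \<beta>"
  shows "(\<exists>b :: 'n \<Rightarrow> real^'n.
            (\<forall>i j. b i \<bullet> b j = (if i = j then 1 else 0)) \<and>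
            (\<forall>i. \<exists>c. G *v b i = c *\<^sub>R b i) \<and>
            (\<forall>i. \<exists>\<mu>. H *v b i = \<mu> *\<^sub>R b i))
         \<and> (2 \<le> k \<longrightarrow> invertible G \<or> invertible H)"
proof -
  have "G ** H = H ** G"
    by (rule ext_pow_sum_eq_commute[OF assms])
  then obtain b :: "'n \<Rightarrow> real^'n" and g h
    where ortho: "\<And>i j. b i \<bullet> b j = (if i = j then 1 else 0)"
      and eigG: "\<And>i. G *v b i = g i *\<^sub>R b i" and eigH: "\<And>i. H *v b i = h i *\<^sub>R b i"
    using commuting_symmetric_orthonormal_eigenbasis[OF assms(1,2)] by blast
  have "invertible G \<or> invertible H" if "2 \<le> k"
    using ext_pow_sum_eq_invertible[OF ortho eigG eigH assms(3) that _ assms(6)] assms(5) by simp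
  then show ?thesis
    using ortho eigG eigH by blast
qed

end
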